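(* Let $m,n\ge 2$ and $p,q\ge 0$ be integers, and let $\bm{i}=(i_1,\dots,i_p),\bm{k}=(k_1,\dots,k_p)\in\{1,\dots,m\}^{\times p}$ and $\bm{j}=(j_1,\dots,j_q),\bm{l}=(l_1,\dots,l_q)\in\{1,\dots,n\}^{\times q}$. For each $\sigma\in\mathfrak{S}_{p+q}$, $$\sum_{s_1,\dots,s_q=1}^m\delta_\sigma(\bm{i}\cup\bm{s},\bm{k}\cup\bm{s})=\delta_{\mathrm{pr}_1(\sigma)}(\bm{i},\bm{k})\,m^{\kappa_1(\sigma)},\qquad \sum_{t_1,\dots,t_p=1}^n\delta_\sigma(\bm{t}\cup\bm{j},\bm{t}\cup\bm{l})=\delta_{\mathrm{pr}_2(\sigma)}(\bm{j},\bm{l})\,n^{\kappa_2(\sigma)}.$$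
   Context: $\bm{i}\cup\bm{s}$ denotes the concatenated sequence $(i_1,\dots,i_p,s_1,\dots,s_q)$ of length $p+q$, and similarly for $\bm{k}\cup\bm{s}$, $\bm{t}\cup\bm{j}=(t_1,\dots,t_p,j_1,\dots,j_q)$, $\bm{t}\cup\bm{l}$. For $\sigma\in\mathfrak{S}_d$ and sequences $\bm{a},\bm{b}$ of length $d$, $\delta_\sigma(\bm{a},\bm{b})=\prod_{r=1}^d\delta(a_{\sigma(r)},b_r)$ (Kronecker delta). For $\sigma\in\mathfrak{S}_{p+q}$: $\mathrm{pr}_1(\sigma)\in\mathfrak{S}_p$ is obtained by writing $\sigma$ as a product of disjoint cycles and erasing the letters $p+1,\dots,p+q$ from each cycle; $\mathrm{pr}_2(\sigma)\in\mathfrak{S}_q$ is obtained by erasing the letters $1,\dots,p$ from each cycle and relabeling $p+1,\dots,p+q$ as $1,\dots,q$. $\kappa_1(\sigma)$ is the number of cycles of $\sigma$ whose support is contained in $\{p+1,\dots,p+q\}$, and $\kappa_2(\sigma)$ the number of cycles whose support is contained in $\{1,\dots,p\}$. *)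

theory Defs
  imports "HOL-Combinatorics.Combinatorics" "HOL-Library.FuncSet"
begin

text \<open>Conventions: letters 1..d of the paper are 0..d-1 here; a permutation
  of S_d is a function sigma with sigma permutes {..<d}.
  Sequences of length d are functions nat => nat, only values at r < d matter.\<close>

definition kdelta :: "nat \<Rightarrow> nat \<Rightarrow> nat" where
  "kdelta a b = (if a = b then 1 else 0)"

definition delta_perm :: "nat \<Rightarrow> (nat \<Rightarrow> nat) \<Rightarrow> (nat \<Rightarrow> nat) \<Rightarrow> (nat \<Rightarrow> nat) \<Rightarrow> nat" where
  "delta_perm d \<sigma> a b = (\<Prod>r<d. kdelta (a (\<sigma> r)) (b r))"

definition concat_seq :: "nat \<Rightarrow> (nat \<Rightarrow> nat) \<Rightarrow> (nat \<Rightarrow> nat) \<Rightarrow> nat \<Rightarrow> nat" where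
  "concat_seq p a b = (\<lambda>r. if r < p then a r else b (r - p))"

text \<open>pr_1: erase the letters p+1..p+q (here p..p+q-1) from each cycle of sigma.
  In the cycle notation this sends x to the next letter in its cycle that was
  not erased, i.e. the first iterate sigma^k x (k > 0) lying in {..<p}.\<close>
definition pr1 :: "nat \<Rightarrow> (nat \<Rightarrow> nat) \<Rightarrow> nat \<Rightarrow> nat" where
  "pr1 p \<sigma> x = (if x < p then (\<sigma> ^^ (LEAST k. 0 < k \<and> (\<sigma> ^^ k) x < p)) x else x)"

text \<open>pr_2: erase the letters 1..p (here 0..p-1) from each cycle and relabel
  p+1..p+q (here p..p+q-1) as 1..q (here 0..q-1).\<close>
definition pr2 :: "nat \<Rightarrow> nat \<Rightarrow> (nat \<Rightarrow> nat) \<Rightarrow> nat \<Rightarrow> nat" where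
  "pr2 p q \<sigma> y = (if y < q then
      (\<sigma> ^^ (LEAST k. 0 < k \<and> p \<le> (\<sigma> ^^ k) (y + p))) (y + p) - p else y)"

text \<open>The cycles of sigma in S_d (fixed points count as 1-cycles): the orbits.\<close>
definition perm_cycles :: "nat \<Rightarrow> (nat \<Rightarrow> nat) \<Rightarrow> nat set set" where
  "perm_cycles d \<sigma> = {orbit \<sigma> x | x. x < d}"

definition kappa1 :: "nat \<Rightarrow> nat \<Rightarrow> (nat \<Rightarrow> nat) \<Rightarrow> nat" where
  "kappa1 p q \<sigma> = card {C \<in> perm_cycles (p + q) \<sigma>. C \<subseteq> {p..<p+q}}"

definition kappa2 :: "nat \<Rightarrow> nat \<Rightarrow> (nat \<Rightarrow> nat) \<Rightarrow> nat" where
  "kappa2 p q \<sigma> = card {C \<in> perm_cycles (p + q) \<sigma>. C \<subseteq> {..<p}}"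

end

theory Submission
  imports Defs
begin

(* Write the summand as the product of the deltas delta(a (sigma r), b r) over all positions r,
   where the summed positions B carry free values, and sum out the free positions one at a time.
   Summing out the value at a letter y either erases y from its cycle, because the two deltas
   through y merge into one, or, if the cycle of y has no unsummed letter left, leaves a free
   factor m.  What remains is the delta of the permutation that sigma induces on the unsummed
   letters, which is pr1 or pr2, times m to the number of cycles lying inside B. *)

definition return_time :: "('a \<Rightarrow> 'a) \<Rightarrow> 'a set \<Rightarrow> 'a \<Rightarrow> nat" where
  "return_time \<sigma> A x = (LEAST k. 0 < k \<and> (\<sigma> ^^ k) x \<in> A)"

text \<open>first_return \<sigma> A is the permutation induced by \<sigma> on A, i.e. \<sigma> with the letters
  outside A erased from its cycles.\<close>
definition first_return :: "('a \<Rightarrow> 'a) \<Rightarrow> 'a set \<Rightarrow> 'a \<Rightarrow> 'a" where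
  "first_return \<sigma> A x = (\<sigma> ^^ return_time \<sigma> A x) x"

lemma return_time_least:
  assumes "0 < j" "j < return_time \<sigma> A x"
  shows "(\<sigma> ^^ j) x \<notin> A"
  using assms not_less_Least[of j "\<lambda>k. 0 < k \<and> (\<sigma> ^^ k) x \<in> A"]
  unfolding return_time_def by auto

lemma return_time_eqI:
  assumes "0 < n" "(\<sigma> ^^ n) x \<in> A" "\<And>j. 0 < j \<Longrightarrow> j < n \<Longrightarrow> (\<sigma> ^^ j) x \<notin> A"
  shows "return_time \<sigma> A x = n"
  unfolding return_time_def
  by (rule Least_equality) (use assms in \<open>auto simp: not_less[symmetric]\<close>)

lemma
  assumes "orbit \<sigma> x \<inter> A \<noteq> {}"
  shows return_time_pos: "0 < return_time \<sigma> A x"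
    and first_return_in: "first_return \<sigma> A x \<in> A"
proof -
  obtain n where "0 < n" "(\<sigma> ^^ n) x \<in> A"
    using assms by (auto simp: orbit_altdef)
  then have "0 < return_time \<sigma> A x \<and> (\<sigma> ^^ return_time \<sigma> A x) x \<in> A"
    using LeastI[of "\<lambda>k. 0 < k \<and> (\<sigma> ^^ k) x \<in> A" n] unfolding return_time_def by blast
  then show "0 < return_time \<sigma> A x" "first_return \<sigma> A x \<in> A"
    by (auto simp: first_return_def)
qed

lemma first_return_in_orbit:
  assumes "orbit \<sigma> x \<inter> A \<noteq> {}"
  shows "first_return \<sigma> A x \<in> orbit \<sigma> x"
  using return_time_pos[OF assms] unfolding first_return_def orbit_altdef by auto

lemma orbit_inter_nonempty:
  assumes "permutation \<sigma>" "x \<in> A"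
  shows "orbit \<sigma> x \<inter> A \<noteq> {}"
  using assms permutation_self_in_orbit[of \<sigma> x] by auto

lemma first_return_via_superset:
  assumes "A \<subseteq> A'" "orbit \<sigma> x \<inter> A \<noteq> {}"
  shows "first_return \<sigma> A x = (if first_return \<sigma> A' x \<in> A then first_return \<sigma> A' x
           else first_return \<sigma> A (first_return \<sigma> A' x))"
proof -
  define t' where "t' = return_time \<sigma> A' x"
  define z where "z = first_return \<sigma> A' x"
  have "orbit \<sigma> x \<inter> A' \<noteq> {}" using assms by blast
  then have t': "0 < t'" "(\<sigma> ^^ t') x = z"
    using return_time_pos[of \<sigma> x A'] unfolding t'_def z_def first_return_def by auto
  have before: "(\<sigma> ^^ j) x \<notin> A" if "0 < j" "j < t'" for j
    using return_time_least[OF that[unfolded t'_def]] assms(1) by blast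
  show ?thesis
  proof (cases "z \<in> A")
    case True
    then have "return_time \<sigma> A x = t'" using t' before by (intro return_time_eqI) auto
    then show ?thesis using True t' by (simp add: first_return_def z_def)
  next
    case False
    obtain n where n: "0 < n" "(\<sigma> ^^ n) x \<in> A"
      using assms(2) by (auto simp: orbit_altdef)
    have "\<not> n < t'" using before[of n] n by blast
    moreover have "n \<noteq> t'" using n(2) t'(2) False by auto
    ultimately have "t' < n" by linarith
    moreover have "(\<sigma> ^^ n) x = (\<sigma> ^^ (n - t')) z"
      using \<open>t' < n\<close> t'(2) funpow_add[of "n - t'" t' \<sigma>] by simp
    ultimately have "(\<sigma> ^^ (n - t')) z \<in> A" "0 < n - t'"
      using n by simp_all
    then have z_returns: "orbit \<sigma> z \<inter> A \<noteq> {}" unfolding orbit_altdef by blast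
    define t where "t = return_time \<sigma> A z"
    have t: "0 < t" "(\<sigma> ^^ t) z \<in> A"
      using return_time_pos[OF z_returns] first_return_in[OF z_returns]
      unfolding t_def first_return_def by auto
    have "return_time \<sigma> A x = t + t'"
    proof (rule return_time_eqI)
      show "(\<sigma> ^^ (t + t')) x \<in> A" using t t' by (simp add: funpow_add)
      fix j assume "0 < j" "j < t + t'"
      then consider "j < t'" | "j = t'" | "t' < j" "j - t' < t" by linarith
      then show "(\<sigma> ^^ j) x \<notin> A"
      proof cases
        case 3
        then have "(\<sigma> ^^ j) x = (\<sigma> ^^ (j - t')) z"
          using t'(2) funpow_add[of "j - t'" t' \<sigma>] by simp
        then show ?thesis using return_time_least[of "j - t'" \<sigma> A z] 3 by (simp add: t_def)
      qed (use before \<open>0 < j\<close> t' False in auto)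
    qed (use t in simp)
    then show ?thesis
      using False t'(2) funpow_add[of t t' \<sigma>] by (simp add: first_return_def z_def t_def)
  qed
qed

lemma first_return_eq_self_iff:
  assumes "permutation \<sigma>" "y \<in> A"
  shows "first_return \<sigma> A y = y \<longleftrightarrow> orbit \<sigma> y \<inter> A = {y}"
proof
  have y_returns: "orbit \<sigma> y \<inter> A \<noteq> {}" using orbit_inter_nonempty[OF assms] .
  assume fixed: "first_return \<sigma> A y = y"
  define t where "t = return_time \<sigma> A y"
  have "0 < t" "(\<sigma> ^^ t) y = y"
    using return_time_pos[OF y_returns] fixed by (simp_all add: t_def first_return_def)
  then have orbit_y: "orbit \<sigma> y = {(\<sigma> ^^ m) y | m. m < t}" by (intro orbit_altdef_bounded)
  have "orbit \<sigma> y \<inter> A \<subseteq> {y}"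
  proof
    fix z assume "z \<in> orbit \<sigma> y \<inter> A"
    then obtain m where "m < t" "z = (\<sigma> ^^ m) y" "z \<in> A" unfolding orbit_y by blast
    then show "z \<in> {y}" using return_time_least[of m \<sigma> A y] by (cases "m = 0") (auto simp: t_def)
  qed
  then show "orbit \<sigma> y \<inter> A = {y}"
    using assms permutation_self_in_orbit[of \<sigma> y] by auto
next
  assume "orbit \<sigma> y \<inter> A = {y}"
  then show "first_return \<sigma> A y = y"
    using first_return_in[of \<sigma> y A] first_return_in_orbit[of \<sigma> y A] by auto
qed

lemma first_return_insert:
  assumes perm: "permutation \<sigma>" and "y \<notin> A" "x \<in> A"
  shows "first_return \<sigma> A x = (if first_return \<sigma> (insert y A) x = y
           then first_return \<sigma> (insert y A) y else first_return \<sigma> (insert y A) x)"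
proof -
  let ?\<rho> = "first_return \<sigma> (insert y A)"
  have "orbit \<sigma> x \<inter> A \<noteq> {}" using orbit_inter_nonempty[OF perm \<open>x \<in> A\<close>] .
  then have x_split: "first_return \<sigma> A x = (if ?\<rho> x \<in> A then ?\<rho> x else first_return \<sigma> A (?\<rho> x))"
    by (intro first_return_via_superset) auto
  show ?thesis
  proof (cases "?\<rho> x = y")
    case False
    then show ?thesis
      using x_split first_return_in[OF orbit_inter_nonempty[OF perm, of x "insert y A"]] \<open>x \<in> A\<close>
      by auto
  next
    case True
    have "y \<in> orbit \<sigma> x"
      using True first_return_in_orbit[OF orbit_inter_nonempty[OF perm, of x "insert y A"]] \<open>x \<in> A\<close>
      by auto
    then have "x \<in> orbit \<sigma> y"
      using orbit_swap permutation_self_in_orbit[OF perm] by metis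
    then have y_returns: "orbit \<sigma> y \<inter> A \<noteq> {}" using \<open>x \<in> A\<close> by auto
    have "?\<rho> y \<noteq> y"
      using first_return_eq_self_iff[OF perm, of y "insert y A"] \<open>x \<in> orbit \<sigma> y\<close> \<open>x \<in> A\<close> \<open>y \<notin> A\<close>
      by auto
    then have "?\<rho> y \<in> A" using first_return_in[of \<sigma> y "insert y A"] y_returns by auto
    then have "first_return \<sigma> A y = ?\<rho> y"
      using first_return_via_superset[of A "insert y A" \<sigma> y] y_returns by auto
    then show ?thesis using x_split True \<open>y \<notin> A\<close> by simp
  qed
qed

lemma inj_on_first_return:
  assumes perm: "permutation \<sigma>"
  shows "inj_on (first_return \<sigma> A) A"
proof -
  have inj_pow: "inj (\<sigma> ^^ n)" for n
    using perm by (simp add: permutation_bijective bij_is_inj)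
  have "x = x'"
    if "x \<in> A" "x' \<in> A" "first_return \<sigma> A x = first_return \<sigma> A x'"
      and le: "return_time \<sigma> A x \<le> return_time \<sigma> A x'" for x x'
  proof -
    define t t' where "t = return_time \<sigma> A x" and "t' = return_time \<sigma> A x'"
    have "(\<sigma> ^^ t) x = (\<sigma> ^^ t) ((\<sigma> ^^ (t' - t)) x')"
      using that funpow_add[of t "t' - t" \<sigma>] by (simp add: t_def t'_def first_return_def)
    then have x_eq: "x = (\<sigma> ^^ (t' - t)) x'" using inj_pow by (simp add: inj_eq)
    have "t' - t = 0"
    proof (rule ccontr)
      assume "t' - t \<noteq> 0"
      then have "(\<sigma> ^^ (t' - t)) x' \<notin> A"
        using return_time_least[of "t' - t" \<sigma> A x'] return_time_pos[of \<sigma> x A]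
          orbit_inter_nonempty[OF perm \<open>x \<in> A\<close>] by (simp add: t_def t'_def)
      then show False using x_eq \<open>x \<in> A\<close> by simp
    qed
    then show "x = x'" using x_eq by simp
  qed
  then show ?thesis
    unfolding inj_on_def by (metis nat_le_linear)
qed

lemma first_return_image:
  assumes "permutation \<sigma>" "finite A"
  shows "first_return \<sigma> A ` A = A"
  using assms inj_on_first_return first_return_in[OF orbit_inter_nonempty[OF assms(1)]]
  by (intro endo_inj_surj) auto

definition cycles_within :: "('a \<Rightarrow> 'a) \<Rightarrow> 'a set \<Rightarrow> 'a set set" where
  "cycles_within \<sigma> B = {orbit \<sigma> z | z. z \<in> B \<and> orbit \<sigma> z \<subseteq> B}"

lemma card_cycles_within_insert:
  assumes perm: "permutation \<sigma>" and "finite B" "y \<notin> B"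
  shows "card (cycles_within \<sigma> (insert y B))
           = card (cycles_within \<sigma> B) + (if orbit \<sigma> y \<subseteq> insert y B then 1 else 0)"
proof -
  have self: "z \<in> orbit \<sigma> z" for z using permutation_self_in_orbit[OF perm] .
  have cycle_cases: "C \<in> cycles_within \<sigma> (insert y B) \<longleftrightarrow>
      C \<in> cycles_within \<sigma> B \<or> C = orbit \<sigma> y \<and> orbit \<sigma> y \<subseteq> insert y B" for C
  proof
    assume "C \<in> cycles_within \<sigma> (insert y B)"
    then obtain z where z: "C = orbit \<sigma> z" "z \<in> insert y B" "orbit \<sigma> z \<subseteq> insert y B"
      unfolding cycles_within_def by blast
    show "C \<in> cycles_within \<sigma> B \<or> C = orbit \<sigma> y \<and> orbit \<sigma> y \<subseteq> insert y B"
    proof (cases "y \<in> orbit \<sigma> z")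
      case True
      then have "orbit \<sigma> y = C"
        using orbit_cyclic_eq3[OF cyclic_on_orbit'[OF perm]] z(1) by simp
      then show ?thesis using z(3) z(1) by simp
    next
      case False
      then have "orbit \<sigma> z \<subseteq> B" "z \<in> B" using z self[of z] by auto
      then show ?thesis unfolding cycles_within_def using z(1) by blast
    qed
  next
    assume "C \<in> cycles_within \<sigma> B \<or> C = orbit \<sigma> y \<and> orbit \<sigma> y \<subseteq> insert y B"
    then show "C \<in> cycles_within \<sigma> (insert y B)"
      unfolding cycles_within_def by blast
  qed
  then have "cycles_within \<sigma> (insert y B) = (if orbit \<sigma> y \<subseteq> insert y B
      then insert (orbit \<sigma> y) (cycles_within \<sigma> B) else cycles_within \<sigma> B)"
    by auto
  moreover have "finite (cycles_within \<sigma> B)"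
    unfolding cycles_within_def using \<open>finite B\<close> by (auto intro: finite_subset[of _ "orbit \<sigma> ` B"])
  moreover have "orbit \<sigma> y \<notin> cycles_within \<sigma> B"
    unfolding cycles_within_def using self[of y] \<open>y \<notin> B\<close> by auto
  ultimately show ?thesis by simp
qed

lemma sum_kdelta_kdelta:
  assumes "finite V" "b \<in> V"
  shows "(\<Sum>v\<in>V. kdelta a v * kdelta v b) = kdelta a b"
proof -
  have "(\<Sum>v\<in>V. kdelta a v * kdelta v b) = (\<Sum>v\<in>V. if v = b then kdelta a b else 0)"
    by (rule sum.cong) (auto simp: kdelta_def)
  also have "\<dots> = kdelta a b" using assms by simp
  finally show ?thesis .
qed

lemma prod_insert_fun_upd:
  assumes "finite A" "y \<notin> A"
  shows "(\<Prod>x\<in>insert y A. h x ((g(y := v)) x)) = h y v * (\<Prod>x\<in>A. h x (g x))"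
proof -
  have "(\<Prod>x\<in>A. h x ((g(y := v)) x)) = (\<Prod>x\<in>A. h x (g x))"
    using \<open>y \<notin> A\<close> by (intro prod.cong) auto
  then show ?thesis using assms by simp
qed

lemma first_return_insert_isolated:
  assumes perm: "permutation \<sigma>" and "y \<notin> A" "orbit \<sigma> y \<inter> A = {}"
  shows "first_return \<sigma> (insert y A) y = y"
    and "x \<in> A \<Longrightarrow> first_return \<sigma> (insert y A) x = first_return \<sigma> A x"
proof -
  let ?\<rho> = "first_return \<sigma> (insert y A)"
  show "?\<rho> y = y"
    using first_return_eq_self_iff[OF perm, of y "insert y A"] assms(3)
      permutation_self_in_orbit[OF perm, of y] by auto
  assume "x \<in> A"
  have "?\<rho> x \<noteq> y"
  proof
    assume "?\<rho> x = y"
    then have "y \<in> orbit \<sigma> x"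
      using first_return_in_orbit[OF orbit_inter_nonempty[OF perm, of x "insert y A"]] \<open>x \<in> A\<close>
      by simp
    then have "x \<in> orbit \<sigma> y"
      using orbit_swap permutation_self_in_orbit[OF perm] by metis
    then show False using assms(3) \<open>x \<in> A\<close> by blast
  qed
  then show "?\<rho> x = first_return \<sigma> A x"
    using first_return_insert[OF perm \<open>y \<notin> A\<close> \<open>x \<in> A\<close>] by simp
qed

lemma first_return_insert_linked:
  assumes perm: "permutation \<sigma>" and "finite A" "y \<notin> A" "orbit \<sigma> y \<inter> A \<noteq> {}"
  obtains x0 where "x0 \<in> A" "first_return \<sigma> (insert y A) x0 = y"
    "first_return \<sigma> A x0 = first_return \<sigma> (insert y A) y"
    "\<And>x. x \<in> A - {x0} \<Longrightarrow> first_return \<sigma> (insert y A) x = first_return \<sigma> A x"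
proof -
  let ?\<rho> = "first_return \<sigma> (insert y A)"
  have "?\<rho> y \<noteq> y"
    using first_return_eq_self_iff[OF perm, of y "insert y A"] assms(3,4) by auto
  have "y \<in> ?\<rho> ` insert y A"
    using first_return_image[OF perm, of "insert y A"] \<open>finite A\<close> by simp
  then obtain x0 where x0: "x0 \<in> insert y A" "?\<rho> x0 = y" by (rule imageE) simp
  then have "x0 \<in> A" using \<open>?\<rho> y \<noteq> y\<close> by auto
  moreover have "first_return \<sigma> A x0 = ?\<rho> y"
    using first_return_insert[OF perm \<open>y \<notin> A\<close> \<open>x0 \<in> A\<close>] x0(2) by simp
  moreover have "?\<rho> x = first_return \<sigma> A x" if "x \<in> A - {x0}" for x
  proof -
    have "?\<rho> x \<noteq> y"
    proof
      assume "?\<rho> x = y"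
      then have "x = x0"
        using inj_onD[OF inj_on_first_return[OF perm, of "insert y A"], of x x0] x0 that by simp
      then show False using that by simp
    qed
    then show ?thesis using first_return_insert[OF perm \<open>y \<notin> A\<close>] that by simp
  qed
  ultimately show ?thesis using that x0(2) by blast
qed

text \<open>If the cycle of y avoids A, all deltas through y hold for every v, which is then free;
  otherwise the deltas entering and leaving y merge into one, as in a matrix product.\<close>
lemma sum_prod_kdelta_first_return_insert:
  fixes f g :: "'a \<Rightarrow> nat"
  assumes perm: "permutation \<sigma>" and "finite A" "y \<notin> A" "finite V" "g ` A \<subseteq> V"
  shows "(\<Sum>v\<in>V. \<Prod>x\<in>insert y A. kdelta ((f(y := v)) (first_return \<sigma> (insert y A) x)) ((g(y := v)) x))
       = (if orbit \<sigma> y \<inter> A = {} then card V else 1) * (\<Prod>x\<in>A. kdelta (f (first_return \<sigma> A x)) (g x))"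
proof -
  let ?\<rho> = "first_return \<sigma> (insert y A)"
  let ?P = "\<Prod>x\<in>A. kdelta (f (first_return \<sigma> A x)) (g x)"
  have returns_A: "first_return \<sigma> A x \<in> A" if "x \<in> A" for x
    using first_return_in[OF orbit_inter_nonempty[OF perm that]] .
  have summand: "(\<Prod>x\<in>insert y A. kdelta ((f(y := v)) (?\<rho> x)) ((g(y := v)) x))
      = kdelta ((f(y := v)) (?\<rho> y)) v * (\<Prod>x\<in>A. kdelta ((f(y := v)) (?\<rho> x)) (g x))" for v
    using prod_insert_fun_upd[OF \<open>finite A\<close> \<open>y \<notin> A\<close>, of "\<lambda>x w. kdelta ((f(y := v)) (?\<rho> x)) w"] .
  show ?thesis
  proof (cases "orbit \<sigma> y \<inter> A = {}")
    case True
    note isolated = first_return_insert_isolated[OF perm \<open>y \<notin> A\<close> True]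
    have "(\<Prod>x\<in>A. kdelta ((f(y := v)) (?\<rho> x)) (g x)) = ?P" for v
      using isolated(2) returns_A \<open>y \<notin> A\<close> by (intro prod.cong refl) (metis fun_upd_other)
    then show ?thesis using summand isolated(1) True by (simp add: kdelta_def)
  next
    case False
    obtain x0 where x0: "x0 \<in> A" "?\<rho> x0 = y" "first_return \<sigma> A x0 = ?\<rho> y"
      and others: "\<And>x. x \<in> A - {x0} \<Longrightarrow> ?\<rho> x = first_return \<sigma> A x"
      using first_return_insert_linked[OF perm \<open>finite A\<close> \<open>y \<notin> A\<close> False] by blast
    let ?R = "\<Prod>x\<in>A - {x0}. kdelta (f (first_return \<sigma> A x)) (g x)"
    have "(f(y := v)) (?\<rho> y) = f (first_return \<sigma> A x0)" for v
      using x0(3) returns_A[OF x0(1)] \<open>y \<notin> A\<close> by auto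
    moreover have "(\<Prod>x\<in>A. kdelta ((f(y := v)) (?\<rho> x)) (g x)) = kdelta v (g x0) * ?R" for v
    proof -
      have "(\<Prod>x\<in>A - {x0}. kdelta ((f(y := v)) (?\<rho> x)) (g x)) = ?R"
        using others returns_A \<open>y \<notin> A\<close> by (intro prod.cong refl) (metis Diff_iff fun_upd_other)
      then show ?thesis using x0(2) by (simp add: prod.remove[OF \<open>finite A\<close> \<open>x0 \<in> A\<close>])
    qed
    ultimately have "(\<Sum>v\<in>V. \<Prod>x\<in>insert y A. kdelta ((f(y := v)) (?\<rho> x)) ((g(y := v)) x))
        = (\<Sum>v\<in>V. kdelta (f (first_return \<sigma> A x0)) v * kdelta v (g x0)) * ?R"
      using summand by (simp add: sum_distrib_right mult.assoc)
    also have "\<dots> = ?P"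
      using sum_kdelta_kdelta[OF \<open>finite V\<close>] assms(5) x0(1)
      by (simp add: image_subset_iff prod.remove[OF \<open>finite A\<close> \<open>x0 \<in> A\<close>])
    finally show ?thesis using False by simp
  qed
qed

lemma first_return_on_domain:
  assumes "\<sigma> permutes D" "x \<in> D"
  shows "first_return \<sigma> D x = \<sigma> x"
proof -
  have "return_time \<sigma> D x = 1"
    using permutes_in_image[OF assms(1)] assms(2) by (intro return_time_eqI) auto
  then show ?thesis by (simp add: first_return_def)
qed

lemma sum_PiE_insert:
  assumes "y \<notin> B"
  shows "(\<Sum>s\<in>insert y B \<rightarrow>\<^sub>E V. F s) = (\<Sum>v\<in>V. \<Sum>h\<in>B \<rightarrow>\<^sub>E V. F (h(y := v)))"
proof -
  have "(\<Sum>s\<in>insert y B \<rightarrow>\<^sub>E V. F s) = (\<Sum>(v, h)\<in>V \<times> (B \<rightarrow>\<^sub>E V). F (h(y := v)))"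
    unfolding PiE_insert_eq
    by (subst sum.reindex[OF inj_combinator[OF assms]]) (simp add: case_prod_unfold)
  then show ?thesis by (simp add: sum.cartesian_product)
qed

lemma sum_PiE_prod_kdelta_override_on:
  fixes f g :: "'a \<Rightarrow> nat"
  assumes perm: "\<sigma> permutes D" and "finite D" "finite V" "B \<subseteq> D" "g ` (D - B) \<subseteq> V"
  shows "(\<Sum>s\<in>B \<rightarrow>\<^sub>E V. \<Prod>r\<in>D. kdelta (override_on s f (D - B) (\<sigma> r)) (override_on s g (D - B) r))
       = (\<Prod>x\<in>D - B. kdelta (f (first_return \<sigma> (D - B) x)) (g x)) * card V ^ card (cycles_within \<sigma> B)"
proof -
  have "permutation \<sigma>" using perm \<open>finite D\<close> permutation_permutes by blast
  have "finite B" using assms(2,4) finite_subset by blast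
  then show ?thesis
    using \<open>B \<subseteq> D\<close> \<open>g ` (D - B) \<subseteq> V\<close>
  proof (induction B arbitrary: f g rule: finite_induct)
    case empty
    have "cycles_within \<sigma> {} = {}"
      unfolding cycles_within_def using orbit_nonempty by blast
    then show ?case
      using permutes_in_image[OF perm] by (simp add: override_on_def first_return_on_domain[OF perm])
  next
    case (insert y B)
    define A where "A = D - insert y B"
    have "D - B = insert y A" "y \<notin> A" "finite A"
      using insert.prems insert.hyps \<open>finite D\<close> by (auto simp: A_def)
    have override: "override_on (h(y := v)) f' A = override_on h (f'(y := v)) (insert y A)"
      for h v and f' :: "'a \<Rightarrow> nat"
      using \<open>y \<notin> A\<close> by (auto simp: override_on_def)
    have "(\<Sum>s\<in>insert y B \<rightarrow>\<^sub>E V. \<Prod>r\<in>D. kdelta (override_on s f A (\<sigma> r)) (override_on s g A r))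
        = (\<Sum>v\<in>V. \<Sum>h\<in>B \<rightarrow>\<^sub>E V. \<Prod>r\<in>D. kdelta (override_on h (f(y := v)) (D - B) (\<sigma> r))
                                            (override_on h (g(y := v)) (D - B) r))"
      unfolding sum_PiE_insert[OF insert.hyps(2)] override \<open>D - B = insert y A\<close> ..
    also have "\<dots> = (\<Sum>v\<in>V. \<Prod>x\<in>D - B. kdelta ((f(y := v)) (first_return \<sigma> (D - B) x))
                                                ((g(y := v)) x)) * card V ^ card (cycles_within \<sigma> B)"
      unfolding sum_distrib_right
    proof (rule sum.cong[OF refl])
      fix v assume "v \<in> V"
      then have "(g(y := v)) ` (D - B) \<subseteq> V"
        using insert.prems(2) \<open>D - B = insert y A\<close> by (auto simp: A_def)
      then show "(\<Sum>h\<in>B \<rightarrow>\<^sub>E V. \<Prod>r\<in>D. kdelta (override_on h (f(y := v)) (D - B) (\<sigma> r))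
                                            (override_on h (g(y := v)) (D - B) r))
          = (\<Prod>x\<in>D - B. kdelta ((f(y := v)) (first_return \<sigma> (D - B) x)) ((g(y := v)) x))
            * card V ^ card (cycles_within \<sigma> B)"
        using insert.prems(1) by (intro insert.IH) auto
    qed
    also have "\<dots> = (\<Prod>x\<in>A. kdelta (f (first_return \<sigma> A x)) (g x))
                     * card V ^ card (cycles_within \<sigma> (insert y B))"
    proof -
      have "orbit \<sigma> y \<subseteq> D" using permutes_orbit_subset[OF perm] insert.prems(1) by blast
      then have "orbit \<sigma> y \<subseteq> insert y B \<longleftrightarrow> orbit \<sigma> y \<inter> A = {}" by (auto simp: A_def)
      moreover have "g ` A \<subseteq> V" using insert.prems(2) by (auto simp: A_def)
      ultimately show ?thesis
        unfolding \<open>D - B = insert y A\<close>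
        using sum_prod_kdelta_first_return_insert[OF \<open>permutation \<sigma>\<close> \<open>finite A\<close> \<open>y \<notin> A\<close> \<open>finite V\<close>]
          card_cycles_within_insert[OF \<open>permutation \<sigma>\<close> insert.hyps]
        by (cases "orbit \<sigma> y \<inter> A = {}") (simp_all add: ac_simps)
    qed
    finally show ?case unfolding A_def .
  qed
qed

lemma pr1_eq_first_return:
  assumes "x < p"
  shows "pr1 p \<sigma> x = first_return \<sigma> {..<p} x"
  using assms by (simp add: pr1_def first_return_def return_time_def)

lemma pr2_eq_first_return:
  assumes "\<sigma> permutes {..<p + q}" "y < q"
  shows "pr2 p q \<sigma> y = first_return \<sigma> {p..<p + q} (y + p) - p"
proof -
  have "(\<sigma> ^^ k) (y + p) < p + q" for k
    using permutes_in_funpow_image[OF assms(1), of "y + p" k] assms(2) by simp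
  then have "(\<lambda>k. 0 < k \<and> p \<le> (\<sigma> ^^ k) (y + p)) = (\<lambda>k. 0 < k \<and> (\<sigma> ^^ k) (y + p) \<in> {p..<p + q})"
    by auto
  then show ?thesis
    using assms(2) by (simp add: pr2_def first_return_def return_time_def)
qed

lemma perm_cycles_subset_eq_cycles_within:
  assumes "\<sigma> permutes {..<d}" "B \<subseteq> {..<d}"
  shows "{C \<in> perm_cycles d \<sigma>. C \<subseteq> B} = cycles_within \<sigma> B"
proof -
  have "permutation \<sigma>" using assms(1) permutation_permutes by blast
  then have "x \<in> orbit \<sigma> x" for x by (rule permutation_self_in_orbit)
  then show ?thesis
    using assms(2) unfolding perm_cycles_def cycles_within_def by auto
qed

lemma sum_PiE_shift:
  fixes p q :: nat
  shows "(\<Sum>s\<in>{..<q} \<rightarrow>\<^sub>E V. F s) = (\<Sum>s\<in>{p..<p + q} \<rightarrow>\<^sub>E V. F (\<lambda>t\<in>{..<q}. s (t + p)))"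
proof -
  let ?shift = "\<lambda>s. \<lambda>t\<in>{..<q}. s (t + p)" and ?unshift = "\<lambda>s. \<lambda>r\<in>{p..<p + q}. s (r - p)"
  have unshift_shift: "?unshift (?shift s) = s" if "s \<in> {p..<p + q} \<rightarrow>\<^sub>E V" for s
  proof
    fix r show "?unshift (?shift s) r = s r"
      using PiE_arb[OF that, of r] by (cases "r \<in> {p..<p + q}") auto
  qed
  have shift_unshift: "?shift (?unshift s) = s" if "s \<in> {..<q} \<rightarrow>\<^sub>E V" for s
  proof
    fix t show "?shift (?unshift s) t = s t"
      using PiE_arb[OF that, of t] by (cases "t < q") auto
  qed
  have "?shift ` ({p..<p + q} \<rightarrow>\<^sub>E V) \<subseteq> {..<q} \<rightarrow>\<^sub>E V"
    using PiE_mem by (fastforce simp: restrict_PiE_iff)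
  moreover have "?unshift ` ({..<q} \<rightarrow>\<^sub>E V) \<subseteq> {p..<p + q} \<rightarrow>\<^sub>E V"
    using PiE_mem by (fastforce simp: restrict_PiE_iff)
  ultimately have "bij_betw ?shift ({p..<p + q} \<rightarrow>\<^sub>E V) ({..<q} \<rightarrow>\<^sub>E V)"
    using unshift_shift shift_unshift by (intro bij_betw_byWitness[where f' = ?unshift]) auto
  then show ?thesis by (rule sum.reindex_bij_betw[symmetric])
qed

lemma sum_delta_perm_concat_seq_right:
  assumes perm: "\<sigma> permutes {..<p + q}" and "finite V" "k ` {..<p} \<subseteq> V"
  shows "(\<Sum>s\<in>{..<q} \<rightarrow>\<^sub>E V. delta_perm (p + q) \<sigma> (concat_seq p i s) (concat_seq p k s))
       = delta_perm p (pr1 p \<sigma>) i k * card V ^ kappa1 p q \<sigma>"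
proof -
  let ?D = "{..<p + q}" and ?B = "{p..<p + q}"
  have "?D - ?B = {..<p}" "?B \<subseteq> ?D" by auto
  have concat: "concat_seq p a (\<lambda>t\<in>{..<q}. s (t + p)) r = override_on s a {..<p} r"
    if "r < p + q" for a s r
    using that by (auto simp: concat_seq_def override_on_def)
  have "(\<Sum>s\<in>{..<q} \<rightarrow>\<^sub>E V. delta_perm (p + q) \<sigma> (concat_seq p i s) (concat_seq p k s))
      = (\<Sum>s\<in>?B \<rightarrow>\<^sub>E V. \<Prod>r\<in>?D. kdelta (override_on s i (?D - ?B) (\<sigma> r)) (override_on s k (?D - ?B) r))"
    unfolding sum_PiE_shift[where p = p] delta_perm_def \<open>?D - ?B = {..<p}\<close>
    using permutes_in_image[OF perm] by (intro sum.cong prod.cong refl) (simp add: concat)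
  also have "\<dots> = (\<Prod>x\<in>{..<p}. kdelta (i (first_return \<sigma> {..<p} x)) (k x))
                   * card V ^ card (cycles_within \<sigma> ?B)"
    using sum_PiE_prod_kdelta_override_on[OF perm _ \<open>finite V\<close> \<open>?B \<subseteq> ?D\<close>] assms(3)
    unfolding \<open>?D - ?B = {..<p}\<close> by simp
  also have "\<dots> = delta_perm p (pr1 p \<sigma>) i k * card V ^ kappa1 p q \<sigma>"
    using perm_cycles_subset_eq_cycles_within[OF perm \<open>?B \<subseteq> ?D\<close>]
    by (simp add: delta_perm_def pr1_eq_first_return kappa1_def)
  finally show ?thesis .
qed

lemma sum_delta_perm_concat_seq_left:
  assumes perm: "\<sigma> permutes {..<p + q}" and "finite V" "l ` {..<q} \<subseteq> V"
  shows "(\<Sum>t\<in>{..<p} \<rightarrow>\<^sub>E V. delta_perm (p + q) \<sigma> (concat_seq p t j) (concat_seq p t l))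
       = delta_perm q (pr2 p q \<sigma>) j l * card V ^ kappa2 p q \<sigma>"
proof -
  let ?D = "{..<p + q}" and ?B = "{..<p}" and ?A = "{p..<p + q}"
  have "?D - ?B = ?A" "?B \<subseteq> ?D" by auto
  have concat: "concat_seq p t a r = override_on t (\<lambda>r. a (r - p)) ?A r" if "r < p + q" for a t r
    using that by (simp add: concat_seq_def override_on_def)
  have "(\<Sum>t\<in>?B \<rightarrow>\<^sub>E V. delta_perm (p + q) \<sigma> (concat_seq p t j) (concat_seq p t l))
      = (\<Sum>t\<in>?B \<rightarrow>\<^sub>E V. \<Prod>r\<in>?D. kdelta (override_on t (\<lambda>r. j (r - p)) (?D - ?B) (\<sigma> r))
                                        (override_on t (\<lambda>r. l (r - p)) (?D - ?B) r))"
    unfolding delta_perm_def \<open>?D - ?B = ?A\<close>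
    using permutes_in_image[OF perm] by (intro sum.cong prod.cong refl) (simp add: concat)
  also have "\<dots> = (\<Prod>x\<in>?A. kdelta (j (first_return \<sigma> ?A x - p)) (l (x - p)))
                   * card V ^ card (cycles_within \<sigma> ?B)"
    using sum_PiE_prod_kdelta_override_on[OF perm _ \<open>finite V\<close> \<open>?B \<subseteq> ?D\<close>] assms(3)
    unfolding \<open>?D - ?B = ?A\<close> by (force simp: image_subset_iff)
  also have "(\<Prod>x\<in>?A. kdelta (j (first_return \<sigma> ?A x - p)) (l (x - p))) = delta_perm q (pr2 p q \<sigma>) j l"
  proof -
    have "?A = (\<lambda>y. y + p) ` {..<q}" by (simp add: lessThan_atLeast0 add.commute)
    then show ?thesis
      using pr2_eq_first_return[OF perm] by (simp add: delta_perm_def prod.reindex)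
  qed
  also have "card (cycles_within \<sigma> ?B) = kappa2 p q \<sigma>"
    using perm_cycles_subset_eq_cycles_within[OF perm \<open>?B \<subseteq> ?D\<close>]
    by (simp add: kappa2_def)
  finally show ?thesis .
qed

theorem lemma2p4:
  fixes m n p q :: nat and i k j l \<sigma> :: "nat \<Rightarrow> nat"
  assumes "m \<ge> 2" and "n \<ge> 2"
    and "i \<in> {..<p} \<rightarrow> {1..m}" and "k \<in> {..<p} \<rightarrow> {1..m}"
    and "j \<in> {..<q} \<rightarrow> {1..n}" and "l \<in> {..<q} \<rightarrow> {1..n}"
    and "\<sigma> permutes {..<p + q}"
  shows "((\<Sum>s \<in> {..<q} \<rightarrow>\<^sub>E {1..m}.
            delta_perm (p + q) \<sigma> (concat_seq p i s) (concat_seq p k s))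
           = delta_perm p (pr1 p \<sigma>) i k * m ^ kappa1 p q \<sigma>)
         \<and> ((\<Sum>t \<in> {..<p} \<rightarrow>\<^sub>E {1..n}.
            delta_perm (p + q) \<sigma> (concat_seq p t j) (concat_seq p t l))
           = delta_perm q (pr2 p q \<sigma>) j l * n ^ kappa2 p q \<sigma>)"
  \<comment> \<open>only the ranges of k and l are used\<close>
  using sum_delta_perm_concat_seq_right[OF assms(7) _ funcset_image[OF assms(4)]]
    sum_delta_perm_concat_seq_left[OF assms(7) _ funcset_image[OF assms(6)]]
  by simp

end
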